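(* Let $h:[\ell,r]\to\mathbb{R}$ be a continuous concave function and $m\in\mathbb{R}$. If $\{x\in[\ell,r): h'_+(x)\leq m\}$ is non-empty, then $x_1=\inf\{x\in[\ell,r): h'_+(x)\leq m\}$ belongs to $\mathrm{xExt}(h)$ and $h'_+(x_1)\leq m$. Similarly, if $\{x\in(\ell,r]: h'_-(x)\geq m\}$ is non-empty, then $x_2=\sup\{x\in(\ell,r]: h'_-(x)\geq m\}$ belongs to $\mathrm{xExt}(h)$ and $h'_-(x_2)\geq m$.
   Context: $h'_\pm(x)=\lim_{y\to x^\pm}\frac{h(y)-h(x)}{y-x}$; $h'_+$ is defined on $[\ell,r)$ with values in $\mathbb{R}\cup\{\infty\}$ and $h'_-$ on $(\ell,r]$ with values in $\mathbb{R}\cup\{-\infty\}$. $\mathrm{xExt}(h)=\{\ell,r\}\cup\{x\in(\ell,r): h|_{[x-\delta,x+\delta]}\text{ is not linear for any }\delta>0\}$. *)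

theory Defs
  imports "HOL-Analysis.Analysis"
begin

text \<open>One-sided derivatives, valued in the extended reals (the limits of the
difference quotients; for concave h on [l,r] they exist in ereal).\<close>

definition rderiv :: "(real \<Rightarrow> real) \<Rightarrow> real \<Rightarrow> ereal" where
  "rderiv h x = Lim (at_right x) (\<lambda>y. ereal ((h y - h x) / (y - x)))"

definition lderiv :: "(real \<Rightarrow> real) \<Rightarrow> real \<Rightarrow> ereal" where
  "lderiv h x = Lim (at_left x) (\<lambda>y. ereal ((h y - h x) / (y - x)))"

definition xExt :: "(real \<Rightarrow> real) \<Rightarrow> real \<Rightarrow> real \<Rightarrow> real set" where
  "xExt h l r = {l, r} \<union> {x \<in> {l<..<r}. \<forall>\<delta>>0. \<not> (\<exists>a b. \<forall>y\<in>{x-\<delta>..x+\<delta>}. h y = a * y + b)}"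

end

theory Submission
  imports Defs
begin

(* The right derivative of a concave h is the supremum of the forward slopes, so h'_+(x) <= m
   says that every forward slope at x is at most m. Slopes decrease, hence this set is closed
   upwards, and continuity of h lets the slope bounds pass to the limit at its infimum x1, which
   therefore belongs to the set. If h were affine near an interior x1, h'_+ would be constant
   there and points just left of x1 would belong to the set as well. The statement for h'_-
   follows by reflecting at the origin, which turns h'_-(x) into -g'_+(-x) for g(t) = h(-t). *)

definition slope :: "(real \<Rightarrow> real) \<Rightarrow> real \<Rightarrow> real \<Rightarrow> real" where
  "slope h a b = (h b - h a) / (b - a)"

lemma concave_on_slope_le:
  assumes "concave_on I h" "x \<in> I" "y \<in> I" "x < t" "t < y"
  shows "slope h x y \<le> slope h x t" and "slope h t y \<le> slope h x y"
proof -
  have "convex_on I (\<lambda>x. - h x)"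
    using assms(1) by (simp add: concave_on_def)
  from convex_on_slope_le[OF this assms(2-5)]
  have "- slope h x t \<le> - slope h x y" "- slope h x y \<le> - slope h t y"
    by (simp_all add: slope_def minus_divide_right)
  then show "slope h x y \<le> slope h x t" "slope h t y \<le> slope h x y"
    by simp_all
qed

lemma rderiv_eq_if_affine_right:
  assumes "d > 0" and "\<And>y. y \<in> {x..<x + d} \<Longrightarrow> h y = a * y + b"
  shows "rderiv h x = ereal a"
proof -
  have "eventually (\<lambda>y. y \<in> {x<..<x + d}) (at_right x)"
    using assms(1) by (intro eventually_at_right_real) auto
  then have "eventually (\<lambda>y. ereal ((h y - h x) / (y - x)) = ereal a) (at_right x)"
    by (rule eventually_mono) (simp add: assms(2) field_simps)
  then show ?thesis
    unfolding rderiv_def by (intro tendsto_Lim tendsto_eventually) auto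
qed

lemma concave_on_rderiv_tendsto_SUP:
  assumes "concave_on {l..r} h" "l \<le> x" "x < r"
  shows "((\<lambda>y. ereal ((h y - h x) / (y - x))) \<longlongrightarrow> (SUP y\<in>{x<..r}. ereal (slope h x y))) (at_right x)"
proof (rule order_tendstoI)
  fix a assume "a < (SUP y\<in>{x<..r}. ereal (slope h x y))"
  then obtain z where z: "z \<in> {x<..r}" "a < ereal (slope h x z)"
    by (auto simp: less_SUP_iff)
  have "eventually (\<lambda>y. y \<in> {x<..<z}) (at_right x)"
    using z by (intro eventually_at_right_real) auto
  then show "eventually (\<lambda>y. a < ereal ((h y - h x) / (y - x))) (at_right x)"
  proof (rule eventually_mono)
    fix y assume "y \<in> {x<..<z}"
    then have "slope h x z \<le> slope h x y"
      using assms z by (intro concave_on_slope_le(1)[of "{l..r}"]) auto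
    with z(2) show "a < ereal ((h y - h x) / (y - x))"
      unfolding slope_def using order_less_le_trans by fastforce
  qed
next
  fix a assume "(SUP y\<in>{x<..r}. ereal (slope h x y)) < a"
  moreover have "eventually (\<lambda>y. y \<in> {x<..<r}) (at_right x)"
    using assms by (intro eventually_at_right_real) auto
  ultimately show "eventually (\<lambda>y. ereal ((h y - h x) / (y - x)) < a) (at_right x)"
  proof (elim eventually_mono)
    fix y assume "(SUP y\<in>{x<..r}. ereal (slope h x y)) < a" "y \<in> {x<..<r}"
    then show "ereal ((h y - h x) / (y - x)) < a"
      unfolding slope_def by (meson SUP_upper greaterThanAtMost_iff greaterThanLessThan_iff less_imp_le order.strict_trans1)
  qed
qed

lemma rderiv_concave_eq_SUP:
  assumes "concave_on {l..r} h" "l \<le> x" "x < r"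
  shows "rderiv h x = (SUP y\<in>{x<..r}. ereal (slope h x y))"
  unfolding rderiv_def
  by (rule tendsto_Lim[OF _ concave_on_rderiv_tendsto_SUP[OF assms]]) simp

lemma rderiv_concave_le_iff:
  assumes "concave_on {l..r} h" "l \<le> x" "x < r"
  shows "rderiv h x \<le> ereal m \<longleftrightarrow> (\<forall>y\<in>{x<..r}. slope h x y \<le> m)"
  by (simp add: rderiv_concave_eq_SUP[OF assms] SUP_le_iff)

lemma concave_on_Inf_slope_le_mem:
  assumes cont: "continuous_on {l..r} h" and conc: "concave_on {l..r} h"
    and S_def: "S = {x \<in> {l..<r}. \<forall>y\<in>{x<..r}. slope h x y \<le> m}" and "S \<noteq> {}"
  shows "Inf S \<in> S"
proof -
  have up_closed: "x' \<in> S" if "x \<in> S" "x < x'" "x' < r" for x x'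
  proof -
    have "slope h x' y \<le> slope h x y" if "y \<in> {x'<..r}" for y
      using \<open>x \<in> S\<close> \<open>x < x'\<close> that by (intro concave_on_slope_le(2)[OF conc]) (auto simp: S_def)
    moreover have "slope h x y \<le> m" if "y \<in> {x'<..r}" for y
      using \<open>x \<in> S\<close> \<open>x < x'\<close> that by (auto simp: S_def)
    ultimately have "\<forall>y\<in>{x'<..r}. slope h x' y \<le> m"
      using order_trans by blast
    moreover have "l \<le> x'"
      using \<open>x \<in> S\<close> \<open>x < x'\<close> by (simp add: S_def)
    ultimately show ?thesis
      using \<open>x' < r\<close> by (simp add: S_def)
  qed
  have bdd: "bdd_below S"
    by (rule bdd_belowI[of _ l]) (auto simp: S_def)
  define x1 where "x1 = Inf S"
  have "l \<le> x1"
    unfolding x1_def using \<open>S \<noteq> {}\<close> by (intro cInf_greatest) (auto simp: S_def)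
  obtain x0 where "x0 \<in> S"
    using \<open>S \<noteq> {}\<close> by auto
  then have "x1 < r"
    unfolding x1_def using cInf_lower[OF _ bdd] by (force simp: S_def)
  have right_of_x1: "x \<in> S" if "x1 < x" "x < r" for x
  proof -
    obtain s where "s \<in> S" "s < x"
      using cInf_lessD[OF \<open>S \<noteq> {}\<close>, of x] \<open>x1 < x\<close> unfolding x1_def by blast
    with up_closed \<open>x < r\<close> show ?thesis
      by blast
  qed
  have "slope h x1 y \<le> m" if y: "y \<in> {x1<..r}" for y
  proof (rule tendsto_upperbound)
    have "(h \<longlongrightarrow> h x1) (at x1 within {l..r})"
      using cont \<open>l \<le> x1\<close> \<open>x1 < r\<close> by (simp add: continuous_on_def)
    then have "(h \<longlongrightarrow> h x1) (at x1 within {x1..y})"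
      by (rule tendsto_within_subset) (use \<open>l \<le> x1\<close> y in auto)
    then have "(h \<longlongrightarrow> h x1) (at_right x1)"
      using y by (simp add: at_within_Icc_at_right)
    then show "((\<lambda>x. slope h x y) \<longlongrightarrow> slope h x1 y) (at_right x1)"
      unfolding slope_def using y by (intro tendsto_intros) auto
    have "eventually (\<lambda>x. x \<in> {x1<..<y}) (at_right x1)"
      using y by (intro eventually_at_right_real) auto
    then show "eventually (\<lambda>x. slope h x y \<le> m) (at_right x1)"
    proof (rule eventually_mono)
      fix x assume x: "x \<in> {x1<..<y}"
      with y have "x \<in> S"
        by (intro right_of_x1) auto
      with x y show "slope h x y \<le> m"
        by (simp add: S_def)
    qed
  qed simp
  with \<open>l \<le> x1\<close> \<open>x1 < r\<close> have "x1 \<in> S"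
    by (simp add: S_def)
  then show ?thesis
    by (simp add: x1_def)
qed

lemma Inf_rderiv_le_in_xExt:
  assumes S_def: "S = {x \<in> {l..<r}. rderiv h x \<le> ereal m}" and "Inf S \<in> S"
  shows "Inf S \<in> xExt h l r"
proof (cases "Inf S = l")
  case True
  then show ?thesis
    by (simp add: xExt_def)
next
  case False
  define x1 where "x1 = Inf S"
  have "l < x1" "x1 < r" "rderiv h x1 \<le> ereal m"
    using \<open>Inf S \<in> S\<close> False by (auto simp: S_def x1_def)
  have not_affine: "\<not> (\<forall>y\<in>{x1-\<delta>..x1+\<delta>}. h y = a * y + b)" if "\<delta> > 0" for \<delta> a b
  proof
    assume affine: "\<forall>y\<in>{x1-\<delta>..x1+\<delta>}. h y = a * y + b"
    define e where "e = min \<delta> (x1 - l) / 2"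
    have e: "0 < e" "e < \<delta>" "x1 - e \<ge> l"
      using \<open>\<delta> > 0\<close> \<open>l < x1\<close> unfolding e_def by (auto simp: min_def field_simps)
    have "rderiv h x1 = ereal a"
      using affine \<open>\<delta> > 0\<close> by (intro rderiv_eq_if_affine_right[of \<delta>]) auto
    moreover have "rderiv h (x1 - e) = ereal a"
      using affine e by (intro rderiv_eq_if_affine_right[of e]) auto
    ultimately have "x1 - e \<in> S"
      using \<open>rderiv h x1 \<le> ereal m\<close> e \<open>x1 < r\<close> by (simp add: S_def)
    moreover have "bdd_below S"
      by (rule bdd_belowI[of _ l]) (simp add: S_def)
    ultimately have "x1 \<le> x1 - e"
      unfolding x1_def by (rule cInf_lower)
    with \<open>0 < e\<close> show False
      by simp
  qed
  with \<open>l < x1\<close> \<open>x1 < r\<close> show ?thesis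
    by (auto simp: xExt_def x1_def)
qed

lemma concave_on_Inf_rderiv_le:
  assumes "continuous_on {l..r} h" "concave_on {l..r} h"
    and S_def: "S = {x \<in> {l..<r}. rderiv h x \<le> ereal m}" and "S \<noteq> {}"
  shows "Inf S \<in> S" and "Inf S \<in> xExt h l r"
proof -
  have "S = {x \<in> {l..<r}. \<forall>y\<in>{x<..r}. slope h x y \<le> m}"
    using rderiv_concave_le_iff[OF assms(2)] by (auto simp: S_def)
  from concave_on_Inf_slope_le_mem[OF assms(1,2) this \<open>S \<noteq> {}\<close>]
  show "Inf S \<in> S" .
  with S_def show "Inf S \<in> xExt h l r"
    by (rule Inf_rderiv_le_in_xExt)
qed

lemma concave_on_reflect:
  fixes h :: "real \<Rightarrow> real"
  assumes "concave_on {l..r} h"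
  shows "concave_on {-r..-l} (\<lambda>t. h (- t))"
proof (rule concave_on_linorderI)
  fix t x y :: real
  assume "0 < t" "t < 1" "x \<in> {-r..-l}" "y \<in> {-r..-l}"
  then have "(1 - t) * h (- x) + t * h (- y) \<le> h ((1 - t) *\<^sub>R (- x) + t *\<^sub>R (- y))"
    by (intro concave_onD[OF assms]) auto
  then show "(1 - t) * h (- x) + t * h (- y) \<le> h (- ((1 - t) *\<^sub>R x + t *\<^sub>R y))"
    by simp
qed (rule convex_real_interval)

lemma lderiv_concave_reflect:
  assumes "concave_on {l..r} h" "l < x" "x \<le> r"
  shows "lderiv h x = - rderiv (\<lambda>t. h (- t)) (- x)"
proof -
  let ?g = "\<lambda>t. h (- t)"
  have "concave_on {-r..-l} ?g"
    using assms(1) by (rule concave_on_reflect)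
  with assms(2,3) have "((\<lambda>s. ereal ((?g s - ?g (- x)) / (s - - x))) \<longlongrightarrow> rderiv ?g (- x)) (at_right (- x))"
    using concave_on_rderiv_tendsto_SUP[of "-r" "-l" ?g "-x"] rderiv_concave_eq_SUP[of "-r" "-l" ?g "-x"] by simp
  then have "((\<lambda>s. - ereal ((?g s - ?g (- x)) / (s - - x))) \<longlongrightarrow> - rderiv ?g (- x)) (at_right (- x))"
    by (simp only: ereal_Lim_uminus[symmetric])
  moreover have "- ereal ((?g s - ?g (- x)) / (s - - x)) = ereal ((h (- s) - h x) / (- s - x))" for s
    by (simp add: minus_divide_right)
  ultimately have "((\<lambda>y. ereal ((h y - h x) / (y - x))) \<longlongrightarrow> - rderiv ?g (- x)) (at_left x)"
    by (simp add: at_left_minus filterlim_filtermap)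
  then show ?thesis
    unfolding lderiv_def by (rule tendsto_Lim[rotated]) simp
qed

lemma xExt_reflect:
  assumes "x \<in> xExt (\<lambda>t. h (- t)) (- r) (- l)"
  shows "- x \<in> xExt h l r"
proof (cases "x \<in> {- r, - l}")
  case True
  then show ?thesis
    by (auto simp: xExt_def)
next
  case False
  with assms have "- r < x" "x < - l"
    and not_affine: "\<And>\<delta> a b. \<delta> > 0 \<Longrightarrow> \<not> (\<forall>y\<in>{x - \<delta>..x + \<delta>}. h (- y) = a * y + b)"
    by (auto simp: xExt_def)
  have "\<not> (\<forall>y\<in>{- x - \<delta>..- x + \<delta>}. h y = a * y + b)" if "\<delta> > 0" for \<delta> a b
  proof
    assume "\<forall>y\<in>{- x - \<delta>..- x + \<delta>}. h y = a * y + b"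
    then have "\<forall>y\<in>{x - \<delta>..x + \<delta>}. h (- y) = (- a) * y + b"
      by auto
    with not_affine \<open>\<delta> > 0\<close> show False
      by blast
  qed
  with \<open>- r < x\<close> \<open>x < - l\<close> show ?thesis
    by (auto simp: xExt_def)
qed

lemma concave_on_Sup_lderiv_ge:
  assumes cont: "continuous_on {l..r} h" and conc: "concave_on {l..r} h"
    and T_def: "T = {x \<in> {l<..r}. ereal m \<le> lderiv h x}" and "T \<noteq> {}"
  shows "Sup T \<in> T" and "Sup T \<in> xExt h l r"
proof -
  let ?g = "\<lambda>t. h (- t)"
  define S where "S = {t \<in> {-r..<-l}. rderiv ?g t \<le> ereal (- m)}"
  have "T = uminus ` S"
  proof (rule set_eqI)
    fix x
    have "x \<in> T \<longleftrightarrow> - x \<in> S"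
    proof (cases "l < x \<and> x \<le> r")
      case True
      then have "lderiv h x = - rderiv ?g (- x)"
        by (intro lderiv_concave_reflect[OF conc]) auto
      then have "ereal m \<le> lderiv h x \<longleftrightarrow> rderiv ?g (- x) \<le> - ereal m"
        by (metis ereal_minus_le_minus ereal_uminus_uminus)
      with True show ?thesis
        by (simp add: T_def S_def)
    next
      case False
      then show ?thesis
        by (auto simp: T_def S_def)
    qed
    then show "x \<in> T \<longleftrightarrow> x \<in> uminus ` S"
      by (metis image_iff minus_minus)
  qed
  then have "Sup T = - Inf S"
    by (simp add: Inf_real_def image_image)
  have "continuous_on {-r..-l} ?g"
    by (rule continuous_on_compose2[OF cont]) (auto intro!: continuous_intros)
  note Inf_S = concave_on_Inf_rderiv_le[OF this concave_on_reflect[OF conc] S_def]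
  have "S \<noteq> {}"
    using \<open>T = uminus ` S\<close> \<open>T \<noteq> {}\<close> by blast
  show "Sup T \<in> T"
    using Inf_S(1)[OF \<open>S \<noteq> {}\<close>] \<open>T = uminus ` S\<close> \<open>Sup T = - Inf S\<close> by simp
  show "Sup T \<in> xExt h l r"
    using xExt_reflect[OF Inf_S(2)[OF \<open>S \<noteq> {}\<close>]] \<open>Sup T = - Inf S\<close> by simp
qed

theorem mainTheorem18:
  fixes h :: "real \<Rightarrow> real" and l r m :: real
  assumes "continuous_on {l..r} h" and "concave_on {l..r} h"
  shows "({x \<in> {l..<r}. rderiv h x \<le> ereal m} \<noteq> {} \<longrightarrow>
           (let x1 = Inf {x \<in> {l..<r}. rderiv h x \<le> ereal m}
            in x1 \<in> xExt h l r \<and> rderiv h x1 \<le> ereal m))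
       \<and> ({x \<in> {l<..r}. lderiv h x \<ge> ereal m} \<noteq> {} \<longrightarrow>
           (let x2 = Sup {x \<in> {l<..r}. lderiv h x \<ge> ereal m}
            in x2 \<in> xExt h l r \<and> lderiv h x2 \<ge> ereal m))"
  using concave_on_Inf_rderiv_le[OF assms refl] concave_on_Sup_lderiv_ge[OF assms refl]
  unfolding Let_def by blast

end
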